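(* Consider the ordinary differential system \[ x'=-x+x^2+y^2,\qquad y'=y(x+y), \] and assume $|x(0)|\leq \varepsilon$, $|y(0)|\leq \delta\leq \varepsilon$. Then for $\varepsilon,\delta$ small enough there exists $c>0$ such that the solution of this system exists on a time interval $[0,T]$ with $T\geq c/\delta$.
   Context: $x,y$ are real-valued unknown functions of $t\geq 0$. The system is a toy model for the Euler–Korteweg system with small vorticity: $x$ plays the role of the dispersive part and $y$ that of the solenoidal part of the velocity. *)

theory Defs
  imports Complex_Main
begin

definition solves_on :: "real \<Rightarrow> (real \<Rightarrow> real) \<Rightarrow> (real \<Rightarrow> real) \<Rightarrow> bool" where
  "solves_on T x y \<longleftrightarrow>
     (\<forall>t\<in>{0..T}.
        (x has_real_derivative (- x t + (x t)^2 + (y t)^2)) (at t within {0..T}) \<and>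
        (y has_real_derivative (y t * (x t + y t))) (at t within {0..T}))"

end

theory Submission
  imports Defs "HOL-Analysis.Analysis"
begin

(* Clamping the vector field to the unit box makes it globally Lipschitz, so Picard iteration
   yields a solution on any interval [0, T], and this solution solves the original system for as
   long as it stays in the box.  With u(t) = eps exp(-t/2), the barriers
     |x| < 2 u + 16 delta^2   and   |y| < delta (11/10 + 8 (eps - u) + 5 delta t)
   hold at t = 0, and at a first time where one of them is touched the system pushes the solution
   strictly back inside: x is damped by the term -x, while y grows at rate at most
   |y| (|x| + |y|) = O(delta (u + delta)).  Up to time 1/(10 delta) the barriers stay below 1/40
   and 2 delta, so the solution never leaves the box. *)

section \<open>Picard iteration for globally Lipschitz fields\<close>

lemma integral_monomial:
  assumes "0 \<le> t"
  shows "integral {0..t} (\<lambda>s. s ^ n) = t ^ Suc n / Suc n"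
proof -
  have "((\<lambda>s. s ^ Suc n / Suc n) has_real_derivative s ^ n) (at s within {0..t})" for s
    using DERIV_cdivide[OF DERIV_pow[of "Suc n" s], of "Suc n"] by (simp del: of_nat_Suc)
  then have "((\<lambda>s. s ^ n) has_integral t ^ Suc n / Suc n - 0 ^ Suc n / Suc n) {0..t}"
    using assms by (intro fundamental_theorem_of_calculus)
      (auto simp: has_real_derivative_iff_has_vector_derivative[symmetric])
  then show ?thesis by (simp add: integral_unique)
qed

fun picard_iter :: "('a::banach \<Rightarrow> 'a) \<Rightarrow> 'a \<Rightarrow> nat \<Rightarrow> real \<Rightarrow> 'a" where
  "picard_iter f u0 0 = (\<lambda>t. u0)"
| "picard_iter f u0 (Suc n) = (\<lambda>t. u0 + integral {0..t} (\<lambda>s. f (picard_iter f u0 n s)))"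

lemma summable_picard_bound:
  fixes c L T :: real
  shows "summable (\<lambda>n. c * L ^ n * T ^ Suc n / fact (Suc n))"
proof (rule summable_comparison_test')
  show "summable (\<lambda>n. \<bar>c * T\<bar> * (inverse (fact n) * \<bar>L * T\<bar> ^ n))"
    by (intro summable_mult summable_exp)
  fix n :: nat
  have "fact n \<le> (fact (Suc n) :: real)" by (rule fact_mono) simp
  then have "\<bar>c * T\<bar> * \<bar>L * T\<bar> ^ n / fact (Suc n) \<le> \<bar>c * T\<bar> * \<bar>L * T\<bar> ^ n / fact n"
    by (intro divide_left_mono) auto
  then show "norm (c * L ^ n * T ^ Suc n / fact (Suc n))
      \<le> \<bar>c * T\<bar> * (inverse (fact n) * \<bar>L * T\<bar> ^ n)"
    by (simp add: abs_mult power_abs power_mult_distrib divide_inverse ac_simps)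
qed

context
  fixes f :: "'a::banach \<Rightarrow> 'a" and L :: real and u0 :: 'a
  assumes lipschitz: "L-lipschitz_on UNIV f"
begin

lemma continuous_on_picard_iter: "continuous_on {0..T} (picard_iter f u0 n)"
proof (induction n)
  case (Suc n)
  have "continuous_on {0..T} (\<lambda>s. f (picard_iter f u0 n s))"
    using continuous_on_compose2[OF lipschitz_on_continuous_on[OF lipschitz] Suc] by simp
  then show ?case
    by (auto intro!: continuous_intros indefinite_integral_continuous_1
        integrable_continuous_interval)
qed simp

lemma norm_picard_iter_step_le:
  assumes "0 \<le> t"
  shows "norm (picard_iter f u0 (Suc n) t - picard_iter f u0 n t)
           \<le> norm (f u0) * L ^ n * t ^ Suc n / fact (Suc n)"
  using assms
proof (induction n arbitrary: t)
  case 0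
  then show ?case by simp
next
  case (Suc n)
  let ?P = "picard_iter f u0"
  define C where "C = norm (f u0) * L ^ n / fact (Suc n)"
  have "continuous_on {0..t} (\<lambda>s. f (?P m s))" for m
    using lipschitz_on_continuous_on[OF lipschitz] continuous_on_picard_iter
    by (rule continuous_on_compose2) simp
  then have int: "(\<lambda>s. f (?P m s)) integrable_on {0..t}" for m
    by (rule integrable_continuous_interval)
  have "norm (?P (Suc (Suc n)) t - ?P (Suc n) t)
      = norm (integral {0..t} (\<lambda>s. f (?P (Suc n) s) - f (?P n s)))"
    using integral_diff[OF int int, of "Suc n" n] by simp
  also have "\<dots> \<le> integral {0..t} (\<lambda>s. L * (C * s ^ Suc n))"
  proof (rule integral_norm_bound_integral)
    fix s assume s: "s \<in> {0..t}"
    have "norm (f (?P (Suc n) s) - f (?P n s)) \<le> L * norm (?P (Suc n) s - ?P n s)"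
      using lipschitz by (rule lipschitz_on_normD) auto
    also have "\<dots> \<le> L * (C * s ^ Suc n)"
      using Suc.IH[of s] s lipschitz_on_nonneg[OF lipschitz]
      by (intro mult_left_mono) (auto simp: C_def)
    finally show "norm (f (?P (Suc n) s) - f (?P n s)) \<le> L * (C * s ^ Suc n)" .
  qed (intro integrable_diff int integrable_continuous_interval continuous_intros)+
  also have "\<dots> = L * C * (t ^ Suc (Suc n) / Suc (Suc n))"
    by (simp only: integral_mult_right integral_monomial[OF Suc.prems] mult.assoc)
  also have "\<dots> = norm (f u0) * L ^ Suc n * t ^ Suc (Suc n) / fact (Suc (Suc n))"
    by (simp add: C_def ac_simps del: of_nat_Suc)
  finally show ?case .
qed

lemma uniformly_convergent_picard_iter:
  obtains u where "uniform_limit {0..T} (picard_iter f u0) u sequentially"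
proof -
  let ?d = "\<lambda>k t. picard_iter f u0 (Suc k) t - picard_iter f u0 k t"
  have bound: "norm (?d k t) \<le> norm (f u0) * L ^ k * T ^ Suc k / fact (Suc k)"
    if "t \<in> {0..T}" for k t
  proof -
    have "norm (?d k t) \<le> norm (f u0) * L ^ k * t ^ Suc k / fact (Suc k)"
      using that by (intro norm_picard_iter_step_le) auto
    also have "\<dots> \<le> norm (f u0) * L ^ k * T ^ Suc k / fact (Suc k)"
      using that lipschitz_on_nonneg[OF lipschitz]
      by (intro divide_right_mono mult_left_mono power_mono) auto
    finally show ?thesis .
  qed
  have "uniform_limit {0..T} (\<lambda>n t. u0 + (\<Sum>k<n. ?d k t)) (\<lambda>t. u0 + (\<Sum>k. ?d k t)) sequentially"
    using Weierstrass_m_test[OF bound summable_picard_bound]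
    by (intro uniform_limit_intros)
  moreover have "u0 + (\<Sum>k<n. ?d k t) = picard_iter f u0 n t" for n t
    using sum_lessThan_telescope[of "\<lambda>k. picard_iter f u0 k t" n] by simp
  ultimately show ?thesis by (intro that) simp
qed

theorem lipschitz_ivp_solution_exists:
  "\<exists>u. u 0 = u0 \<and> (\<forall>t\<in>{0..T}. (u has_vector_derivative f (u t)) (at t within {0..T}))"
proof -
  let ?P = "picard_iter f u0"
  obtain u where lim: "uniform_limit {0..T} ?P u sequentially"
    using uniformly_convergent_picard_iter .
  have contf: "continuous_on UNIV f"
    using lipschitz by (rule lipschitz_on_continuous_on)
  have cont_u: "continuous_on {0..T} u"
    using lim by (rule uniform_limit_theorem[rotated]) (auto simp: continuous_on_picard_iter)
  have lim_f: "uniform_limit {0..T} (\<lambda>n s. f (?P n s)) (\<lambda>s. f (u s)) sequentially"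
    using lim lipschitz_on_uniformly_continuous[OF lipschitz]
    by (rule uniform_limit_compose_uniformly_continuous_on) auto
  have integral_eq: "u t = u0 + integral {0..t} (\<lambda>s. f (u s))" if t: "t \<in> {0..T}" for t
  proof -
    have sub: "{0..t} \<subseteq> {0..T}" using t by auto
    obtain I J where I: "\<And>n. ((\<lambda>s. f (?P n s)) has_integral I n) {0..t}"
      and J: "((\<lambda>s. f (u s)) has_integral J) {0..t}" and IJ: "I \<longlonglongrightarrow> J"
      using uniform_limit_integral[OF uniform_limit_on_subset[OF lim_f sub]]
        continuous_on_compose2[OF contf continuous_on_picard_iter] by auto
    have "(\<lambda>n. ?P (Suc n) t) \<longlonglongrightarrow> u0 + J"
      using tendsto_add[OF tendsto_const IJ] by (simp add: I[THEN integral_unique])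
    moreover have "(\<lambda>n. ?P (Suc n) t) \<longlonglongrightarrow> u t"
      using LIMSEQ_Suc[OF tendsto_uniform_limitI[OF lim t]] .
    ultimately show ?thesis
      using J LIMSEQ_unique by (auto simp: integral_unique)
  qed
  (* v agrees with u on [0, T] and is differentiable by the fundamental theorem of calculus. *)
  define v where "v t = u0 + integral {0..t} (\<lambda>s. f (u s))" for t
  have "(v has_vector_derivative f (v t)) (at t within {0..T})" if "t \<in> {0..T}" for t
    unfolding v_def integral_eq[OF that, symmetric]
    using that continuous_on_compose2[OF contf cont_u]
    by (auto intro!: derivative_eq_intros integral_has_vector_derivative)
  moreover have "v 0 = u0" by (simp add: v_def)
  ultimately show ?thesis by blast
qed

end

section \<open>The system truncated outside the unit box\<close>

fun toy_field :: "real \<times> real \<Rightarrow> real \<times> real" where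
  "toy_field (p, q) = (- p + p\<^sup>2 + q\<^sup>2, q * (p + q))"

abbreviation unit_box :: "(real \<times> real) set" where
  "unit_box \<equiv> cbox (-1, -1) (1, 1)"

lemma mem_unit_box_iff: "(p, q) \<in> unit_box \<longleftrightarrow> \<bar>p\<bar> \<le> 1 \<and> \<bar>q\<bar> \<le> 1"
  by auto

lemma lipschitz_on_toy_field: "10-lipschitz_on unit_box toy_field"
proof (rule lipschitz_onI)
  fix u v assume "u \<in> unit_box" "v \<in> unit_box"
  then obtain p q p' q' where uv: "u = (p, q)" "v = (p', q')"
    and box: "\<bar>p\<bar> \<le> 1" "\<bar>q\<bar> \<le> 1" "\<bar>p'\<bar> \<le> 1" "\<bar>q'\<bar> \<le> 1"
    by (cases u, cases v) auto
  have "\<bar>(- p + p\<^sup>2 + q\<^sup>2) - (- p' + p'\<^sup>2 + q'\<^sup>2)\<bar>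
      = \<bar>- (p - p') + (p + p') * (p - p') + (q + q') * (q - q')\<bar>"
    by (simp add: power2_eq_square algebra_simps)
  also have "\<dots> \<le> \<bar>p - p'\<bar> + \<bar>p + p'\<bar> * \<bar>p - p'\<bar> + \<bar>q + q'\<bar> * \<bar>q - q'\<bar>"
    by (simp add: abs_mult[symmetric] abs_triangle_ineq4 order_trans[OF abs_triangle_ineq])
  also have "\<dots> \<le> \<bar>p - p'\<bar> + 2 * \<bar>p - p'\<bar> + 2 * \<bar>q - q'\<bar>"
    using box by (intro add_mono order_refl mult_right_mono) auto
  finally have first: "\<bar>(- p + p\<^sup>2 + q\<^sup>2) - (- p' + p'\<^sup>2 + q'\<^sup>2)\<bar> \<le> 3 * \<bar>p - p'\<bar> + 2 * \<bar>q - q'\<bar>"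
    by simp
  have "\<bar>q * (p + q) - q' * (p' + q')\<bar> = \<bar>q * (p - p') + (p' + q + q') * (q - q')\<bar>"
    by (simp add: algebra_simps)
  also have "\<dots> \<le> \<bar>q\<bar> * \<bar>p - p'\<bar> + \<bar>p' + q + q'\<bar> * \<bar>q - q'\<bar>"
    by (simp add: abs_mult[symmetric] abs_triangle_ineq)
  also have "\<dots> \<le> 1 * \<bar>p - p'\<bar> + 3 * \<bar>q - q'\<bar>"
    using box by (intro add_mono mult_right_mono) auto
  finally have second: "\<bar>q * (p + q) - q' * (p' + q')\<bar> \<le> \<bar>p - p'\<bar> + 3 * \<bar>q - q'\<bar>" by simp
  have "dist (toy_field u) (toy_field v)
      \<le> \<bar>(- p + p\<^sup>2 + q\<^sup>2) - (- p' + p'\<^sup>2 + q'\<^sup>2)\<bar> + \<bar>q * (p + q) - q' * (p' + q')\<bar>"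
    using norm_Pair_le[of "(- p + p\<^sup>2 + q\<^sup>2) - (- p' + p'\<^sup>2 + q'\<^sup>2)" "q * (p + q) - q' * (p' + q')"]
    by (simp add: uv dist_norm)
  also have "\<dots> \<le> 5 * (dist p p' + dist q q')"
    unfolding dist_real_def by (rule order_trans[OF add_mono[OF first second]]) simp
  also have "\<dots> \<le> 10 * dist u v"
    using dist_fst_le[of u v] dist_snd_le[of u v] by (simp add: uv)
  finally show "dist (toy_field u) (toy_field v) \<le> 10 * dist u v" .
qed simp

lemma lipschitz_on_truncated_toy_field:
  "10-lipschitz_on UNIV (\<lambda>u. toy_field (clamp (-1, -1) (1, 1) u))"
proof -
  have "1-lipschitz_on UNIV (clamp (-1, -1) (1, 1) :: real \<times> real \<Rightarrow> _)"
    by (rule lipschitz_onI) (use dist_clamps_le_dist_args in auto)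
  moreover have "clamp (-1, -1) (1, 1) u \<in> unit_box" for u :: "real \<times> real"
    by (rule clamp_in_interval) (auto simp: Basis_prod_def)
  then have "10-lipschitz_on (clamp (-1, -1) (1, 1) ` UNIV) toy_field"
    by (intro lipschitz_on_subset[OF lipschitz_on_toy_field]) blast
  ultimately show ?thesis
    using lipschitz_on_compose2 by fastforce
qed

lemma exists_solution_while_in_unit_box:
  "\<exists>x y. x 0 = x0 \<and> y 0 = y0 \<and> continuous_on {0..T} x \<and> continuous_on {0..T} y \<and>
     (\<forall>t\<in>{0..T}. \<bar>x t\<bar> \<le> 1 \<longrightarrow> \<bar>y t\<bar> \<le> 1 \<longrightarrow>
        (x has_real_derivative - x t + (x t)\<^sup>2 + (y t)\<^sup>2) (at t within {0..T}) \<and>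
        (y has_real_derivative y t * (x t + y t)) (at t within {0..T}))"
proof -
  obtain w where w0: "w 0 = (x0, y0)" and w': "\<And>t. t \<in> {0..T} \<Longrightarrow>
      (w has_vector_derivative toy_field (clamp (-1, -1) (1, 1) (w t))) (at t within {0..T})"
    using lipschitz_ivp_solution_exists[OF lipschitz_on_truncated_toy_field] by blast
  define x y where "x = (\<lambda>t. fst (w t))" and "y = (\<lambda>t. snd (w t))"
  have "continuous_on {0..T} w"
    using w' by (rule continuous_on_vector_derivative)
  then have "continuous_on {0..T} x" "continuous_on {0..T} y"
    unfolding x_def y_def by (auto intro: continuous_intros)
  moreover have "(x has_real_derivative - x t + (x t)\<^sup>2 + (y t)\<^sup>2) (at t within {0..T}) \<and>
      (y has_real_derivative y t * (x t + y t)) (at t within {0..T})"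
    if "t \<in> {0..T}" "\<bar>x t\<bar> \<le> 1" "\<bar>y t\<bar> \<le> 1" for t
  proof -
    have "w t = (x t, y t)"
      by (simp add: x_def y_def)
    with that(2,3) have "toy_field (clamp (-1, -1) (1, 1) (w t))
        = (- x t + (x t)\<^sup>2 + (y t)\<^sup>2, y t * (x t + y t))"
      using mem_unit_box_iff[of "x t" "y t"] by simp
    then show ?thesis
      using bounded_linear.has_vector_derivative[OF bounded_linear_fst w'[OF that(1)]]
        bounded_linear.has_vector_derivative[OF bounded_linear_snd w'[OF that(1)]]
      by (simp add: x_def y_def has_real_derivative_iff_has_vector_derivative)
  qed
  moreover have "x 0 = x0" "y 0 = y0"
    using w0 by (simp_all add: x_def y_def)
  ultimately show ?thesis
    by blast
qed

section \<open>Barriers\<close>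

lemma first_exit_time:
  fixes w :: "real \<Rightarrow> 'a::topological_space"
  assumes cont: "continuous_on {0..T} w" and "open U" and "w 0 \<in> U"
    and "t \<in> {0..T}" "w t \<notin> U"
  obtains t1 where "0 < t1" "t1 \<le> T" "w t1 \<notin> U" "w t1 \<in> closure U" "\<And>s. s \<in> {0..<t1} \<Longrightarrow> w s \<in> U"
proof -
  define Exit where "Exit = {0..T} \<inter> w -` (- U)"
  have "closed Exit"
    unfolding Exit_def using cont \<open>open U\<close> by (intro continuous_closed_preimage) auto
  moreover have "Exit \<noteq> {}" "bdd_below Exit"
    using assms by (auto simp: Exit_def intro: bdd_belowI[of _ 0])
  ultimately have t1: "Inf Exit \<in> Exit"
    by (rule closed_contains_Inf[rotated -1])
  then have range: "0 \<le> Inf Exit" "Inf Exit \<le> T" "w (Inf Exit) \<notin> U"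
    by (auto simp: Exit_def)
  have before: "w s \<in> U" if "s \<in> {0..<Inf Exit}" for s
    using that cInf_lower[OF _ \<open>bdd_below Exit\<close>, of s] range by (force simp: Exit_def)
  have pos: "0 < Inf Exit"
    using range \<open>w 0 \<in> U\<close> by (cases "Inf Exit = 0") auto
  have "w ` closure {0..<Inf Exit} \<subseteq> closure U"
    using pos range before
    by (intro image_closure_subset continuous_on_subset[OF cont])
      (auto intro: closure_subset[THEN subsetD])
  then have "w (Inf Exit) \<in> closure U"
    using pos by auto
  with pos range before show ?thesis by (intro that) auto
qed

lemma derivative_nonneg_at_left_max:
  fixes h :: "real \<Rightarrow> real"
  assumes der: "(h has_real_derivative D) (at t within {a..b})" and "a < t" "t \<le> b"
    and left_max: "\<And>s. s \<in> {a..<t} \<Longrightarrow> h s \<le> h t"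
  shows "0 \<le> D"
proof (rule ccontr)
  assume "\<not> 0 \<le> D"
  then obtain d where "d > 0" and dec: "\<And>e. e > 0 \<Longrightarrow> t - e \<in> {a..b} \<Longrightarrow> e < d \<Longrightarrow> h t < h (t - e)"
    using has_real_derivative_neg_dec_left[OF der] by force
  define e where "e = min d (t - a) / 2"
  have e: "0 < e" "e < d" "e < t - a"
    using \<open>d > 0\<close> \<open>a < t\<close> by (auto simp: e_def min_def)
  have "h t < h (t - e)"
    using e \<open>t \<le> b\<close> by (intro dec) auto
  moreover have "h (t - e) \<le> h t"
    using e by (intro left_max) auto
  ultimately show False by simp
qed

lemma barrier_derivative_le_at_touch:
  fixes g r :: "real \<Rightarrow> real"
  assumes g: "(g has_real_derivative G) (at t within {a..b})"
    and r: "(r has_real_derivative R) (at t within {a..b})"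
    and "a < t" "t \<le> b" and touch: "\<bar>g t\<bar> = r t" and below: "\<And>s. s \<in> {a..<t} \<Longrightarrow> \<bar>g s\<bar> \<le> r s"
  shows "R \<le> sgn (g t) * G"
proof -
  let ?h = "\<lambda>s. sgn (g t) * g s - r s"
  have sgn_le: "sgn (g t) * g s \<le> \<bar>g s\<bar>" for s
    by (simp add: sgn_if abs_ge_self abs_ge_minus_self)
  have left_max: "?h s \<le> ?h t" if "s \<in> {a..<t}" for s
  proof -
    have "?h s \<le> \<bar>g s\<bar> - r s"
      using sgn_le[of s] by simp
    also have "\<dots> \<le> 0"
      using below[OF that] by simp
    also have "0 = ?h t"
      using touch by (simp add: abs_sgn mult.commute)
    finally show ?thesis .
  qed
  have "(?h has_real_derivative sgn (g t) * G - R) (at t within {a..b})"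
    using DERIV_diff[OF DERIV_cmult[OF g] r] .
  from derivative_nonneg_at_left_max[OF this \<open>a < t\<close> \<open>t \<le> b\<close> left_max] show ?thesis
    by simp
qed

definition x_barrier :: "real \<Rightarrow> real \<Rightarrow> real \<Rightarrow> real" where
  "x_barrier \<epsilon> \<delta> t = 2 * (\<epsilon> * exp (- t / 2)) + 16 * \<delta>\<^sup>2"

definition y_barrier :: "real \<Rightarrow> real \<Rightarrow> real \<Rightarrow> real" where
  "y_barrier \<epsilon> \<delta> t = \<delta> * (11 / 10 + 8 * (\<epsilon> - \<epsilon> * exp (- t / 2)) + 5 * (\<delta> * t))"

lemma has_real_derivative_x_barrier:
  "(x_barrier \<epsilon> \<delta> has_real_derivative - (\<epsilon> * exp (- t / 2))) (at t within S)"
  unfolding x_barrier_def [abs_def] by (auto intro!: derivative_eq_intros)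

lemma has_real_derivative_y_barrier:
  "(y_barrier \<epsilon> \<delta> has_real_derivative \<delta> * (4 * (\<epsilon> * exp (- t / 2)) + 5 * \<delta>)) (at t within S)"
  unfolding y_barrier_def [abs_def] by (auto intro!: derivative_eq_intros simp: algebra_simps)

lemma continuous_on_barriers:
  "continuous_on S (x_barrier \<epsilon> \<delta>)" "continuous_on S (y_barrier \<epsilon> \<delta>)"
  unfolding x_barrier_def [abs_def] y_barrier_def [abs_def] by (auto intro!: continuous_intros)

lemma sgn_mult_x_field_le:
  fixes p q :: real
  assumes "\<bar>p\<bar> = a"
  shows "sgn p * (- p + p\<^sup>2 + q\<^sup>2) \<le> - a + a\<^sup>2 + q\<^sup>2"
proof -
  have "sgn p * (p\<^sup>2 + q\<^sup>2) \<le> p\<^sup>2 + q\<^sup>2"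
    by (simp add: sgn_if)
  moreover have "sgn p * p = a"
    using assms by (simp add: abs_sgn mult.commute)
  moreover have "p\<^sup>2 = a\<^sup>2"
    using assms by (metis power2_abs)
  ultimately show ?thesis
    by (simp add: algebra_simps)
qed

lemma sgn_mult_y_field_le:
  fixes p q :: real
  assumes "\<bar>q\<bar> = b"
  shows "sgn q * (q * (p + q)) \<le> b * (\<bar>p\<bar> + b)"
proof -
  have "sgn q * (q * (p + q)) = b * (p + q)"
    using assms by (simp add: abs_sgn mult.commute mult.left_commute)
  also have "\<dots> \<le> b * (\<bar>p\<bar> + b)"
    using assms by (intro mult_left_mono) auto
  finally show ?thesis .
qed

context
  fixes \<epsilon> \<delta> :: real
  assumes \<delta>: "0 < \<delta>" "\<delta> \<le> \<epsilon>" "\<epsilon> \<le> 1/100"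
begin

lemma x_barrier_bounds:
  assumes "0 \<le> t"
  shows "0 < \<epsilon> * exp (- t / 2)" "\<epsilon> * exp (- t / 2) \<le> \<epsilon>" "x_barrier \<epsilon> \<delta> t \<le> 1/40"
proof -
  define u where "u = \<epsilon> * exp (- t / 2)"
  have "exp (- t / 2) \<le> 1" using assms by simp
  then show u: "0 < \<epsilon> * exp (- t / 2)" "\<epsilon> * exp (- t / 2) \<le> \<epsilon>"
    using \<delta> by (auto intro: mult_left_le)
  have "\<delta> * \<delta> \<le> 1/100 * (1/100)" using \<delta> by (intro mult_mono) auto
  then have "\<delta>\<^sup>2 \<le> 1/10000" by (simp add: power2_eq_square)
  then show "x_barrier \<epsilon> \<delta> t \<le> 1/40"
    using u \<delta> unfolding x_barrier_def u_def[symmetric] by linarith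
qed

lemma y_barrier_bounds:
  assumes "0 \<le> t" "\<delta> * t \<le> 1/10"
  shows "\<delta> < y_barrier \<epsilon> \<delta> t" "y_barrier \<epsilon> \<delta> t \<le> 2 * \<delta>"
proof -
  define u where "u = \<epsilon> * exp (- t / 2)"
  have "0 < u" "u \<le> \<epsilon>" "0 \<le> \<delta> * t"
    using x_barrier_bounds[OF assms(1)] assms \<delta> by (simp_all add: u_def)
  then have "1 < 11 / 10 + 8 * (\<epsilon> - u) + 5 * (\<delta> * t)"
    by (simp add: algebra_simps)
  moreover have "11 / 10 + 8 * (\<epsilon> - u) + 5 * (\<delta> * t) \<le> 2"
    using \<open>u > 0\<close> assms(2) \<delta> by (simp add: algebra_simps)
  ultimately
  show "\<delta> < y_barrier \<epsilon> \<delta> t" "y_barrier \<epsilon> \<delta> t \<le> 2 * \<delta>"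
    unfolding y_barrier_def u_def[symmetric] using \<delta> by (simp_all add: mult_le_cancel_left1)
qed

lemma x_barrier_inward:
  assumes "0 \<le> t" "\<bar>q\<bar> \<le> 2 * \<delta>"
  shows "- x_barrier \<epsilon> \<delta> t + (x_barrier \<epsilon> \<delta> t)\<^sup>2 + q\<^sup>2 < - (\<epsilon> * exp (- t / 2))"
proof -
  define u where "u = \<epsilon> * exp (- t / 2)"
  have u: "0 < u" "u \<le> \<epsilon>"
    using x_barrier_bounds[OF assms(1)] by (simp_all add: u_def)
  have A: "x_barrier \<epsilon> \<delta> t = 2 * u + 16 * \<delta>\<^sup>2" "x_barrier \<epsilon> \<delta> t \<le> 1/40"
    using x_barrier_bounds[OF assms(1)] by (simp_all add: u_def x_barrier_def)
  have "(x_barrier \<epsilon> \<delta> t)\<^sup>2 \<le> x_barrier \<epsilon> \<delta> t * (1/40)"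
    unfolding power2_eq_square using A u by (intro mult_left_mono) auto
  moreover have "q\<^sup>2 \<le> 4 * \<delta>\<^sup>2"
    using assms(2) abs_le_square_iff[of q "2 * \<delta>"] \<delta> by (simp add: power_mult_distrib)
  ultimately show ?thesis
    unfolding u_def[symmetric] using u A zero_le_power2[of \<delta>] by linarith
qed

lemma y_barrier_inward:
  assumes "0 \<le> t" "\<delta> * t \<le> 1/10" "\<bar>p\<bar> \<le> x_barrier \<epsilon> \<delta> t"
  shows "y_barrier \<epsilon> \<delta> t * (\<bar>p\<bar> + y_barrier \<epsilon> \<delta> t) < \<delta> * (4 * (\<epsilon> * exp (- t / 2)) + 5 * \<delta>)"
proof -
  define u where "u = \<epsilon> * exp (- t / 2)"
  have B: "0 \<le> y_barrier \<epsilon> \<delta> t" "y_barrier \<epsilon> \<delta> t \<le> 2 * \<delta>"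
    using y_barrier_bounds[OF assms(1,2)] \<delta> by auto
  have "y_barrier \<epsilon> \<delta> t * (\<bar>p\<bar> + y_barrier \<epsilon> \<delta> t) \<le> (2 * \<delta>) * (x_barrier \<epsilon> \<delta> t + 2 * \<delta>)"
    using B assms(3) by (intro mult_mono add_mono) auto
  also have "\<dots> = 4 * \<delta> * u + 4 * \<delta>\<^sup>2 + 32 * \<delta>\<^sup>2 * \<delta>"
    by (simp add: x_barrier_def u_def power2_eq_square algebra_simps)
  also have "\<dots> < \<delta> * (4 * u + 5 * \<delta>)"
    using \<delta> by (simp add: power2_eq_square algebra_simps)
  finally show ?thesis by (simp add: u_def)
qed

lemma x_barrier_not_touched:
  assumes dx: "(x has_real_derivative - x t + (x t)\<^sup>2 + (y t)\<^sup>2) (at t within {0..T})"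
    and "0 < t" "t \<le> T" and touch: "\<bar>x t\<bar> = x_barrier \<epsilon> \<delta> t"
    and below: "\<And>s. s \<in> {0..<t} \<Longrightarrow> \<bar>x s\<bar> \<le> x_barrier \<epsilon> \<delta> s" and "\<bar>y t\<bar> \<le> 2 * \<delta>"
  shows False
proof -
  have "- (\<epsilon> * exp (- t / 2)) \<le> sgn (x t) * (- x t + (x t)\<^sup>2 + (y t)\<^sup>2)"
    using barrier_derivative_le_at_touch[OF dx has_real_derivative_x_barrier \<open>0 < t\<close> \<open>t \<le> T\<close>
        touch below] .
  also have "\<dots> \<le> - x_barrier \<epsilon> \<delta> t + (x_barrier \<epsilon> \<delta> t)\<^sup>2 + (y t)\<^sup>2"
    using touch by (rule sgn_mult_x_field_le)
  also have "\<dots> < - (\<epsilon> * exp (- t / 2))"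
    using assms by (intro x_barrier_inward) auto
  finally show False by simp
qed

lemma y_barrier_not_touched:
  assumes dy: "(y has_real_derivative y t * (x t + y t)) (at t within {0..T})"
    and "0 < t" "t \<le> T" "\<delta> * t \<le> 1/10" and touch: "\<bar>y t\<bar> = y_barrier \<epsilon> \<delta> t"
    and below: "\<And>s. s \<in> {0..<t} \<Longrightarrow> \<bar>y s\<bar> \<le> y_barrier \<epsilon> \<delta> s" and "\<bar>x t\<bar> \<le> x_barrier \<epsilon> \<delta> t"
  shows False
proof -
  have "\<delta> * (4 * (\<epsilon> * exp (- t / 2)) + 5 * \<delta>) \<le> sgn (y t) * (y t * (x t + y t))"
    using barrier_derivative_le_at_touch[OF dy has_real_derivative_y_barrier \<open>0 < t\<close> \<open>t \<le> T\<close>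
        touch below] .
  also have "\<dots> \<le> y_barrier \<epsilon> \<delta> t * (\<bar>x t\<bar> + y_barrier \<epsilon> \<delta> t)"
    using touch by (rule sgn_mult_y_field_le)
  also have "\<dots> < \<delta> * (4 * (\<epsilon> * exp (- t / 2)) + 5 * \<delta>)"
    using assms by (intro y_barrier_inward) auto
  finally show False by simp
qed

lemma toy_solution_trapped:
  fixes x y :: "real \<Rightarrow> real"
  assumes T: "\<delta> * T \<le> 1/10"
    and init: "\<bar>x 0\<bar> \<le> \<epsilon>" "\<bar>y 0\<bar> \<le> \<delta>"
    and cont: "continuous_on {0..T} x" "continuous_on {0..T} y"
    and ode: "\<And>t. t \<in> {0..T} \<Longrightarrow> \<bar>x t\<bar> \<le> 1 \<Longrightarrow> \<bar>y t\<bar> \<le> 1 \<Longrightarrow>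
        (x has_real_derivative - x t + (x t)\<^sup>2 + (y t)\<^sup>2) (at t within {0..T}) \<and>
        (y has_real_derivative y t * (x t + y t)) (at t within {0..T})"
    and t: "t \<in> {0..T}"
  shows "\<bar>x t\<bar> < x_barrier \<epsilon> \<delta> t \<and> \<bar>y t\<bar> < y_barrier \<epsilon> \<delta> t"
proof (rule ccontr)
  let ?A = "x_barrier \<epsilon> \<delta>" and ?B = "y_barrier \<epsilon> \<delta>" and ?U = "{..<0} \<times> {..<0::real}"
  define w where "w s = (\<bar>x s\<bar> - ?A s, \<bar>y s\<bar> - ?B s)" for s
  assume "\<not> ?thesis"
  then have "w t \<notin> ?U" by (simp add: w_def)
  moreover have "continuous_on {0..T} w"
    unfolding w_def using cont by (intro continuous_intros continuous_on_barriers)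
  moreover have "\<bar>x 0\<bar> < ?A 0"
    using init \<delta> zero_le_power2[of \<delta>] by (simp add: x_barrier_def; linarith)
  then have "w 0 \<in> ?U"
    using init y_barrier_bounds[of 0] \<delta> by (simp add: w_def)
  ultimately obtain t1 where t1: "0 < t1" "t1 \<le> T" "w t1 \<notin> ?U" "w t1 \<in> closure ?U"
    and before: "\<And>s. s \<in> {0..<t1} \<Longrightarrow> w s \<in> ?U"
    using first_exit_time[OF _ _ _ t] by (metis open_Times open_lessThan)
  have "\<delta> * t1 \<le> 1/10"
    using mult_left_mono[OF \<open>t1 \<le> T\<close>, of \<delta>] T \<delta> by linarith
  note bounds = x_barrier_bounds[of t1] y_barrier_bounds[of t1, OF _ this]
  have le: "\<bar>x t1\<bar> \<le> ?A t1" "\<bar>y t1\<bar> \<le> ?B t1"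
    using t1(4) by (simp_all add: closure_Times w_def)
  have below: "\<bar>x s\<bar> \<le> ?A s" "\<bar>y s\<bar> \<le> ?B s" if "s \<in> {0..<t1}" for s
    using before[OF that] by (simp_all add: w_def)
  have y_small: "\<bar>y t1\<bar> \<le> 2 * \<delta>"
    using le bounds t1 by fastforce
  have dx: "(x has_real_derivative - x t1 + (x t1)\<^sup>2 + (y t1)\<^sup>2) (at t1 within {0..T})"
    and dy: "(y has_real_derivative y t1 * (x t1 + y t1)) (at t1 within {0..T})"
    using ode[of t1] le bounds t1 \<delta> by auto
  consider "\<bar>x t1\<bar> = ?A t1" | "\<bar>y t1\<bar> = ?B t1"
    using t1(3) le by (force simp: w_def)
  then show False
  proof cases
    case 1
    then show False
      by (rule x_barrier_not_touched[where x = x and y = y, OF dx t1(1,2) _ below(1) y_small])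
  next
    case 2
    then show False
      by (rule y_barrier_not_touched[where x = x and y = y,
            OF dy t1(1,2) \<open>\<delta> * t1 \<le> 1/10\<close> _ below(2) le(1)])
  qed
qed

lemma long_time_solution_exists:
  assumes "\<bar>x0\<bar> \<le> \<epsilon>" "\<bar>y0\<bar> \<le> \<delta>"
  shows "\<exists>x y. x 0 = x0 \<and> y 0 = y0 \<and> solves_on ((1/10) / \<delta>) x y"
proof -
  define T where "T = (1/10) / \<delta>"
  have T: "\<delta> * T \<le> 1/10" using \<delta> by (simp add: T_def)
  obtain x y where xy0: "x 0 = x0" "y 0 = y0"
    and cont: "continuous_on {0..T} x" "continuous_on {0..T} y"
    and ode: "\<And>t. t \<in> {0..T} \<Longrightarrow> \<bar>x t\<bar> \<le> 1 \<Longrightarrow> \<bar>y t\<bar> \<le> 1 \<Longrightarrow>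
      (x has_real_derivative - x t + (x t)\<^sup>2 + (y t)\<^sup>2) (at t within {0..T}) \<and>
      (y has_real_derivative y t * (x t + y t)) (at t within {0..T})"
    using exists_solution_while_in_unit_box[of x0 y0 T] by blast
  have "\<bar>x t\<bar> \<le> 1 \<and> \<bar>y t\<bar> \<le> 1" if t: "t \<in> {0..T}" for t
  proof -
    have "t \<le> T" using t by simp
    then have "\<delta> * t \<le> 1/10"
      using mult_left_mono[of t T \<delta>] T \<delta> by linarith
    then show ?thesis
      using toy_solution_trapped[OF T _ _ cont ode t] assms xy0 t
        x_barrier_bounds(3)[of t] y_barrier_bounds(2)[of t] \<delta> by auto
  qed
  with ode have "solves_on T x y"
    unfolding solves_on_def by blast
  with xy0 show ?thesis
    unfolding T_def by blast
qed

end

theorem proposition1p3: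
  shows "\<exists>c>0. \<exists>\<epsilon>0>0. \<forall>\<epsilon> \<delta> x0 y0 :: real.
           0 < \<delta> \<and> \<delta> \<le> \<epsilon> \<and> \<epsilon> \<le> \<epsilon>0 \<and> \<bar>x0\<bar> \<le> \<epsilon> \<and> \<bar>y0\<bar> \<le> \<delta> \<longrightarrow>
           (\<exists>T \<ge> c / \<delta>. \<exists>x y :: real \<Rightarrow> real.
              x 0 = x0 \<and> y 0 = y0 \<and> solves_on T x y)"
proof (rule exI[of _ "1/10"], rule conjI)
  show "\<exists>\<epsilon>0>0. \<forall>\<epsilon> \<delta> x0 y0 :: real.
      0 < \<delta> \<and> \<delta> \<le> \<epsilon> \<and> \<epsilon> \<le> \<epsilon>0 \<and> \<bar>x0\<bar> \<le> \<epsilon> \<and> \<bar>y0\<bar> \<le> \<delta> \<longrightarrow>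
      (\<exists>T \<ge> (1/10) / \<delta>. \<exists>x y. x 0 = x0 \<and> y 0 = y0 \<and> solves_on T x y)"
  proof (rule exI[of _ "1/100"], intro conjI allI impI)
    fix \<epsilon> \<delta> x0 y0 :: real
    assume "0 < \<delta> \<and> \<delta> \<le> \<epsilon> \<and> \<epsilon> \<le> 1/100 \<and> \<bar>x0\<bar> \<le> \<epsilon> \<and> \<bar>y0\<bar> \<le> \<delta>"
    then have "\<exists>x y. x 0 = x0 \<and> y 0 = y0 \<and> solves_on ((1/10) / \<delta>) x y"
      by (intro long_time_solution_exists) auto
    then show "\<exists>T \<ge> (1/10) / \<delta>. \<exists>x y. x 0 = x0 \<and> y 0 = y0 \<and> solves_on T x y"
      by blast
  qed simp
qed simp

end
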